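(* Let $\sigma>0$, $\bar\gamma>0$, $c_\infty\ge0$, and for $\gamma\in(0,\bar\gamma]$ let $\tau_\gamma:[0,\infty)\to[0,\infty)$ be non-decreasing with $\tau_\gamma(0)=0$, and assume there exist $R_1,L\ge0$, $m>0$ such that for all $\gamma\in(0,\bar\gamma]$, $\sup_{r>0}\tau_\gamma(r)/r\le1+\gamma L$ and $\sup_{r>R_1}\tau_\gamma(r)/r\le1-\gamma m$. Let $Q_\gamma$ be the Markov kernel on $[0,\infty)$ $$Q_\gamma(w,A)=\delta_0(A)\int_{\mathbb{R}}\bar p_{\sigma^2\gamma}(\tau_\gamma(w)+\gamma c_\infty,g)\varphi(g)dg+\int_{\mathbb{R}}\mathbb{1}_A(\tau_\gamma(w)+\gamma c_\infty-2\sigma\gamma^{1/2}g)\{1-\bar p_{\sigma^2\gamma}(\tau_\gamma(w)+\gamma c_\infty,g)\}\varphi(g)dg,$$ where $\bar p_{\sigma^2\gamma}(a,g)=1\wedge\varphi_{\sigma^2\gamma}(a-\sigma\sqrt\gamma g)/\varphi_{\sigma^2\gamma}(\sigma\sqrt\gamma g)$. Let $\mathcal V_1^*(w)=w$. Then for all $\gamma\in(0,\bar\gamma]$ and $w\ge0$, $$Q_\gamma\mathcal V_1^*(w)\le(1-\gamma m)\mathcal V_1^*(w)\mathbb{1}_{(R_1,\infty)}(w)+(1+\gamma L)\mathcal V_1^*(w)\mathbb{1}_{(0,R_1]}(w)+\gamma c_\infty.$$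
   Context: $\varphi$ is the standard normal density and $\varphi_s(t)=(2\pi s)^{-1/2}e^{-t^2/(2s)}$. *)

theory Defs
  imports "HOL-Analysis.Analysis"
begin

definition gauss_dens :: "real \<Rightarrow> real \<Rightarrow> real" where
  "gauss_dens s t = 1 / sqrt (2 * pi * s) * exp (- t\<^sup>2 / (2 * s))"

definition std_gauss :: "real \<Rightarrow> real" where
  "std_gauss t = gauss_dens 1 t"

definition pbar :: "real \<Rightarrow> real \<Rightarrow> real \<Rightarrow> real \<Rightarrow> real" where
  "pbar \<sigma> \<gamma> a g = min 1 (gauss_dens (\<sigma>\<^sup>2 * \<gamma>) (a - \<sigma> * sqrt \<gamma> * g)
                            / gauss_dens (\<sigma>\<^sup>2 * \<gamma>) (\<sigma> * sqrt \<gamma> * g))"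

text \<open>The Markov kernel Q_gamma applied to a function f (i.e. the integral of f against
  Q_gamma(w, .)): the Dirac part at 0 contributes f 0 times its mass.\<close>
definition Qop :: "real \<Rightarrow> real \<Rightarrow> real \<Rightarrow> (real \<Rightarrow> real) \<Rightarrow> (real \<Rightarrow> real) \<Rightarrow> real \<Rightarrow> real" where
  "Qop \<sigma> c_inf \<gamma> \<tau> f w =
     (let a = \<tau> w + \<gamma> * c_inf in
       f 0 * (LINT g|lborel. pbar \<sigma> \<gamma> a g * std_gauss g)
       + (LINT g|lborel. f (a - 2 * \<sigma> * sqrt \<gamma> * g) * (1 - pbar \<sigma> \<gamma> a g) * std_gauss g))"

definition V1star :: "real \<Rightarrow> real" where
  "V1star w = w"

end

theory Submission imports Defs "HOL-Probability.Distributions" begin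

text \<open>Write \<open>a = \<tau>\<^sub>\<gamma>(w) + \<gamma> c\<^sub>\<infinity>\<close>, \<open>s = \<sigma> \<surd>\<gamma>\<close> and \<open>b = a / s\<close>. The atom at \<open>0\<close> contributes
  nothing since \<open>\<V>\<^sub>1\<^sup>*(0) = 0\<close>, and \<open>pbar(a,g) \<phi>(g) = min(\<phi>(g), \<phi>(g - b))\<close>, so
  \<open>Q\<^sub>\<gamma>\<V>\<^sub>1\<^sup>*(w) = \<integral>(a - 2sg) \<phi>(g) dg - \<integral>(a - 2sg) min(\<phi>(g), \<phi>(g - b)) dg\<close>.
  The first integral is \<open>a\<close>; the second vanishes because the reflection \<open>g \<mapsto> b - g\<close>
  preserves the minimum and flips the sign of \<open>a - 2sg\<close>. Hence \<open>Q\<^sub>\<gamma>\<V>\<^sub>1\<^sup>*(w) = \<tau>\<^sub>\<gamma>(w) + \<gamma> c\<^sub>\<infinity>\<close>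
  exactly, and the drift condition is just the two growth bounds on \<open>\<tau>\<^sub>\<gamma>\<close>.\<close>

lemma std_gauss_eq_std_normal_density: "std_gauss = std_normal_density"
  by (auto simp: fun_eq_iff std_gauss_def gauss_dens_def std_normal_density_def)

lemma pbar_mult_std_gauss:
  assumes "\<sigma> > 0" "\<gamma> > 0"
  shows "pbar \<sigma> \<gamma> a g * std_gauss g = min (std_gauss g) (std_gauss (g - a / (\<sigma> * sqrt \<gamma>)))"
proof -
  define s where "s = \<sigma> * sqrt \<gamma>"
  have "s > 0" using assms by (simp add: s_def)
  have var: "\<sigma>\<^sup>2 * \<gamma> = s\<^sup>2" using assms by (simp add: s_def power_mult_distrib)
  have "gauss_dens (\<sigma>\<^sup>2 * \<gamma>) (a - s * g) / gauss_dens (\<sigma>\<^sup>2 * \<gamma>) (s * g)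
      = exp (- (a - s * g)\<^sup>2 / (2 * s\<^sup>2) + (s * g)\<^sup>2 / (2 * s\<^sup>2))"
    unfolding gauss_dens_def var using \<open>s > 0\<close> by (simp add: exp_diff[symmetric])
  also have "- (a - s * g)\<^sup>2 / (2 * s\<^sup>2) + (s * g)\<^sup>2 / (2 * s\<^sup>2) = - (g - a / s)\<^sup>2 / 2 + g\<^sup>2 / 2"
    using \<open>s > 0\<close> by (simp add: field_simps power2_eq_square)
  finally have ratio: "gauss_dens (\<sigma>\<^sup>2 * \<gamma>) (a - s * g) / gauss_dens (\<sigma>\<^sup>2 * \<gamma>) (s * g) * std_gauss g
      = std_gauss (g - a / s)"
    unfolding std_gauss_def gauss_dens_def by (simp add: exp_add[symmetric])
  have "std_gauss g \<ge> 0" unfolding std_gauss_def gauss_dens_def by simp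
  then show ?thesis
    using ratio unfolding pbar_def s_def by (simp add: min_mult_distrib_right)
qed

lemma integrable_affine_mult_std_normal_density:
  "integrable lborel (\<lambda>g. (a + c * g) * std_normal_density g)"
proof -
  have "integrable lborel (\<lambda>g. a * std_normal_density g + c * (std_normal_density g * g ^ 1))"
    using integrable_std_normal_moment[of 0] integrable_std_normal_moment[of 1] by auto
  then show ?thesis by (simp add: algebra_simps)
qed

lemma integral_affine_mult_std_normal_density:
  "(LINT g|lborel. (a + c * g) * std_normal_density g) = a"
proof -
  have "(LINT g|lborel. (a + c * g) * std_normal_density g)
      = (LINT g|lborel. a * std_normal_density g + c * (std_normal_density g * g ^ 1))"
    by (simp add: algebra_simps)
  also have "\<dots> = a"
    using integrable_std_normal_moment[of 0] integrable_std_normal_moment[of 1]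
      integral_std_normal_moment_even[of 0] integral_std_normal_moment_odd[of 0] by simp
  finally show ?thesis .
qed

lemma integrable_affine_mult_min_std_normal_density:
  "integrable lborel (\<lambda>g. (a + c * g) * min (std_normal_density g) (std_normal_density (g - b)))"
proof (rule Bochner_Integration.integrable_bound[OF integrable_affine_mult_std_normal_density])
  show "(\<lambda>g. (a + c * g) * min (std_normal_density g) (std_normal_density (g - b)))
      \<in> borel_measurable lborel"
    unfolding std_normal_density_def by measurable
  show "AE g in lborel. norm ((a + c * g) * min (std_normal_density g) (std_normal_density (g - b)))
      \<le> norm ((a + c * g) * std_normal_density g)"
    by (intro AE_I2) (simp add: abs_mult mult_left_mono)
qed

lemma lborel_integral_reflection_antisymmetric:
  fixes f :: "real \<Rightarrow> real"
  assumes "\<And>x. f (b - x) = - f x"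
  shows "integral\<^sup>L lborel f = 0"
proof -
  have "integral\<^sup>L lborel f = \<bar>-1\<bar> *\<^sub>R (LINT x|lborel. f (b + -1 * x))"
    by (rule lborel_integral_real_affine) simp
  also have "\<dots> = - integral\<^sup>L lborel f"
    using assms by simp
  finally show ?thesis by simp
qed

lemma Qop_V1star:
  assumes "\<sigma> > 0" "\<gamma> > 0"
  shows "Qop \<sigma> c \<gamma> t V1star w = t w + \<gamma> * c"
proof -
  define a where "a = t w + \<gamma> * c"
  define s where "s = \<sigma> * sqrt \<gamma>"
  define b where "b = a / s"
  define h where "h g = min (std_normal_density g) (std_normal_density (g - b))" for g
  have "s > 0" using assms by (simp add: s_def)
  have integrand: "V1star (a - 2 * \<sigma> * sqrt \<gamma> * g) * (1 - pbar \<sigma> \<gamma> a g) * std_gauss g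
      = (a + (- 2 * s) * g) * std_normal_density g - (a + (- 2 * s) * g) * h g" for g
    using pbar_mult_std_gauss[OF assms, of a g]
    by (simp add: V1star_def h_def b_def s_def std_gauss_eq_std_normal_density algebra_simps)
  have "(a - 2 * s * (b - x)) * h (b - x) = - ((a - 2 * s * x) * h x)" for x
  proof -
    have "h (b - x) = h x"
      unfolding h_def std_normal_density_def by (simp add: min.commute power2_commute)
    moreover have "s * b = a"
      using \<open>s > 0\<close> by (simp add: b_def)
    ultimately show ?thesis by (simp add: algebra_simps)
  qed
  then have accepted: "(LINT g|lborel. (a + (- 2 * s) * g) * h g) = 0"
    by (intro lborel_integral_reflection_antisymmetric[of _ b]) simp
  have "Qop \<sigma> c \<gamma> t V1star w
      = (LINT g|lborel. V1star (a - 2 * \<sigma> * sqrt \<gamma> * g) * (1 - pbar \<sigma> \<gamma> a g) * std_gauss g)"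
    unfolding Qop_def a_def[symmetric] by (simp add: V1star_def)
  also have "\<dots> = (LINT g|lborel. (a + (- 2 * s) * g) * std_normal_density g)
      - (LINT g|lborel. (a + (- 2 * s) * g) * h g)"
    unfolding integrand h_def
    by (intro Bochner_Integration.integral_diff integrable_affine_mult_std_normal_density
        integrable_affine_mult_min_std_normal_density)
  also have "\<dots> = a"
    unfolding accepted integral_affine_mult_std_normal_density by simp
  finally show ?thesis by (simp add: a_def)
qed

theorem proposition8:
  fixes \<sigma> \<gamma>bar c_inf R\<^sub>1 L m :: real
    and \<tau> :: "real \<Rightarrow> real \<Rightarrow> real"
  assumes "\<sigma> > 0" and "\<gamma>bar > 0" and "c_inf \<ge> 0"
    and "R\<^sub>1 \<ge> 0" and "L \<ge> 0" and "m > 0"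
    and tau_range: "\<And>\<gamma> r. \<gamma> \<in> {0<..\<gamma>bar} \<Longrightarrow> r \<ge> 0 \<Longrightarrow> \<tau> \<gamma> r \<ge> 0"
    and tau_mono: "\<And>\<gamma>. \<gamma> \<in> {0<..\<gamma>bar} \<Longrightarrow> mono_on {0..} (\<tau> \<gamma>)"
    and tau_0: "\<And>\<gamma>. \<gamma> \<in> {0<..\<gamma>bar} \<Longrightarrow> \<tau> \<gamma> 0 = 0"
    and tau_L: "\<And>\<gamma>. \<gamma> \<in> {0<..\<gamma>bar} \<Longrightarrow> \<forall>r>0. \<tau> \<gamma> r / r \<le> 1 + \<gamma> * L"
    and tau_m: "\<And>\<gamma>. \<gamma> \<in> {0<..\<gamma>bar} \<Longrightarrow> \<forall>r>R\<^sub>1. \<tau> \<gamma> r / r \<le> 1 - \<gamma> * m"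
  shows "\<forall>\<gamma>\<in>{0<..\<gamma>bar}. \<forall>w\<ge>0.
           Qop \<sigma> c_inf \<gamma> (\<tau> \<gamma>) V1star w
             \<le> (1 - \<gamma> * m) * V1star w * indicator {R\<^sub>1<..} w
               + (1 + \<gamma> * L) * V1star w * indicator {0<..R\<^sub>1} w + \<gamma> * c_inf"
proof (intro ballI allI impI)
  fix \<gamma> w :: real
  assume \<gamma>: "\<gamma> \<in> {0<..\<gamma>bar}" and "w \<ge> 0"
  have "\<tau> \<gamma> w \<le> (1 - \<gamma> * m) * w * indicator {R\<^sub>1<..} w + (1 + \<gamma> * L) * w * indicator {0<..R\<^sub>1} w"
  proof (cases "w = 0")
    case True
    then show ?thesis using tau_0[OF \<gamma>] by simp
  next
    case False
    with \<open>w \<ge> 0\<close> have "w > 0" by simp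
    show ?thesis
    proof (cases "w > R\<^sub>1")
      case True
      then show ?thesis using tau_m[OF \<gamma>] \<open>w > 0\<close> by (simp add: divide_le_eq)
    next
      case False
      then show ?thesis using tau_L[OF \<gamma>] \<open>w > 0\<close> by (simp add: divide_le_eq)
    qed
  qed
  then show "Qop \<sigma> c_inf \<gamma> (\<tau> \<gamma>) V1star w
      \<le> (1 - \<gamma> * m) * V1star w * indicator {R\<^sub>1<..} w
        + (1 + \<gamma> * L) * V1star w * indicator {0<..R\<^sub>1} w + \<gamma> * c_inf"
    using Qop_V1star[OF \<open>\<sigma> > 0\<close>, of \<gamma> c_inf "\<tau> \<gamma>" w] \<gamma> by (simp add: V1star_def)
qed

end
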